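(* Assume the Schanuel conjecture. Let $b\in\overline{\mathbb{Q}}\setminus\{0,1\}$ with a fixed logarithm $\ln b$, and let $a_1,\dots,a_m$ be a ladder with respect to $b$ such that $1,a_1,\dots,a_m$ are linearly independent over $\mathbb{Q}$. Then for each $k=1,\dots,m$ exactly one of $a_k,\,b^{a_k}$ is transcendental over $F_{k-1}$; denoting it $b_k$, the numbers $\ln b,b_1,\dots,b_m$ are algebraically independent over $\mathbb{Q}$. In particular $\ln b\notin\overline{F_m}$.
   Context: Schanuel conjecture: if $z_1,\dots,z_n\in\mathbb{C}$ are linearly independent over $\mathbb{Q}$, then the field $\mathbb{Q}(z_1,\dots,z_n,e^{z_1},\dots,e^{z_n})$ has transcendence degree at least $n$ over $\mathbb{Q}$ (at least $n$ of these $2n$ numbers are algebraically independent over $\mathbb{Q}$). $b^x:=e^{x\ln b}$ for the fixed nonzero value $\ln b$. $\overline{F}$ denotes the algebraic closure in $\mathbb{C}$ of a field $F$. Ladder: for $a_1,\dots,a_m\in\mathbb{C}$ put $F_0:=\mathbb{Q}$ and $F_k:=\mathbb{Q}(a_1,\dots,a_k,b^{a_1},\dots,b^{a_k})$; the sequence is a ladder if for every $1\le k\le m$, $a_k\in\overline{F_{k-1}}$ or $b^{a_k}\in\overline{F_{k-1}}$. *)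

theory Defs
  imports "HOL-Analysis.Analysis" "HOL-Computational_Algebra.Polynomial" "HOL-Library.Poly_Mapping"
begin

definition mpoly_eval :: "((nat \<Rightarrow>\<^sub>0 nat) \<Rightarrow>\<^sub>0 rat) \<Rightarrow> (nat \<Rightarrow> complex) \<Rightarrow> complex" where
  "mpoly_eval p x = (\<Sum>\<mu>\<in>Poly_Mapping.keys p. of_rat (Poly_Mapping.lookup p \<mu>) * (\<Prod>i\<in>Poly_Mapping.keys \<mu>. x i ^ Poly_Mapping.lookup \<mu> i))"

definition alg_indep_Q :: "nat set \<Rightarrow> (nat \<Rightarrow> complex) \<Rightarrow> bool" where
  "alg_indep_Q I x \<longleftrightarrow>
     (\<forall>p. (\<forall>mon\<in>Poly_Mapping.keys p. Poly_Mapping.keys mon \<subseteq> I) \<longrightarrow> mpoly_eval p x = 0 \<longrightarrow> p = 0)"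

definition lin_indep_Q :: "nat \<Rightarrow> (nat \<Rightarrow> complex) \<Rightarrow> bool" where
  "lin_indep_Q n z \<longleftrightarrow>
     (\<forall>q :: nat \<Rightarrow> rat. (\<Sum>i<n. of_rat (q i) * z i) = 0 \<longrightarrow> (\<forall>i<n. q i = 0))"

definition Schanuel_conjecture :: bool where
  "Schanuel_conjecture \<longleftrightarrow>
     (\<forall>n (z :: nat \<Rightarrow> complex). lin_indep_Q n z \<longrightarrow>
        (\<exists>S \<subseteq> {..<2*n}. card S = n \<and>
           alg_indep_Q S (\<lambda>i. if i < n then z i else exp (z (i - n)))))"

definition subfield_C :: "complex set \<Rightarrow> bool" where
  "subfield_C F \<longleftrightarrow> 0 \<in> F \<and> 1 \<in> F \<and> (\<forall>x\<in>F. \<forall>y\<in>F. x + y \<in> F \<and> x * y \<in> F)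
      \<and> (\<forall>x\<in>F. - x \<in> F \<and> inverse x \<in> F)"

definition gen_field :: "complex set \<Rightarrow> complex set" where
  "gen_field S = \<Inter> {F. subfield_C F \<and> S \<subseteq> F}"

definition alg_over :: "complex set \<Rightarrow> complex \<Rightarrow> bool" where
  "alg_over F x \<longleftrightarrow> (\<exists>p :: complex poly. p \<noteq> 0 \<and> (\<forall>i. coeff p i \<in> F) \<and> poly p x = 0)"

text \<open>b^x := exp (x * L) for the fixed logarithm L of b.
  F_k = Q(a_1..a_k, b^a_1..b^a_k).\<close>
definition cpow_L :: "complex \<Rightarrow> complex \<Rightarrow> complex" where
  "cpow_L L x = exp (x * L)"

definition ladder_field :: "complex \<Rightarrow> (nat \<Rightarrow> complex) \<Rightarrow> nat \<Rightarrow> complex set" where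
  "ladder_field L a k = gen_field (a ` {1..k} \<union> (\<lambda>i. cpow_L L (a i)) ` {1..k})"

definition is_ladder :: "complex \<Rightarrow> (nat \<Rightarrow> complex) \<Rightarrow> nat \<Rightarrow> bool" where
  "is_ladder L a m \<longleftrightarrow> (\<forall>k\<in>{1..m}. alg_over (ladder_field L a (k - 1)) (a k)
                                  \<or> alg_over (ladder_field L a (k - 1)) (cpow_L L (a k)))"

end

theory Submission
  imports Defs "HOL-Algebra.Algebraic_Closure_Type"
begin

text \<open>Schanuel's conjecture applied to \<open>ln b, a\<^sub>1 ln b, \<dots>, a\<^sub>m ln b\<close>, which are linearly
  independent over \<open>\<rat>\<close> because \<open>1, a\<^sub>1, \<dots>, a\<^sub>m\<close> are, says that these numbers and their
  exponentials \<open>b, b\<^bsup>a\<^sub>1\<^esup>, \<dots>, b\<^bsup>a\<^sub>m\<^esup>\<close> generate a field of transcendence degree at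
  least \<open>m + 1\<close>. Since \<open>b\<close> is algebraic and, climbing the ladder, \<open>F\<^sub>k\<close> is algebraic over
  \<open>\<rat>(b\<^sub>1, \<dots>, b\<^sub>k)\<close>, all of them are algebraic over \<open>\<rat>(ln b, b\<^sub>1, \<dots>, b\<^sub>m)\<close>. By the
  Steinitz exchange lemma no one of these \<open>m + 1\<close> generators can then be algebraic over the
  others. That is their algebraic independence; it also rules out that both \<open>a\<^sub>k\<close> and
  \<open>b\<^bsup>a\<^sub>k\<^esup>\<close> are algebraic over \<open>F\<^sub>k\<^sub>-\<^sub>1\<close> (then \<open>b\<^sub>k\<close> would be algebraic over
  \<open>b\<^sub>1, \<dots>, b\<^sub>k\<^sub>-\<^sub>1\<close>), and that \<open>ln b\<close> is algebraic over \<open>F\<^sub>m\<close>.\<close>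

section \<open>Subfields of the complex numbers\<close>

context
  fixes F assumes F: "subfield_C F"
begin

lemma subfield_C_zero: "0 \<in> F" and subfield_C_one: "1 \<in> F"
  using F by (auto simp: subfield_C_def)

lemma subfield_C_add: "x \<in> F \<Longrightarrow> y \<in> F \<Longrightarrow> x + y \<in> F"
  using F by (auto simp: subfield_C_def)

lemma subfield_C_mult: "x \<in> F \<Longrightarrow> y \<in> F \<Longrightarrow> x * y \<in> F"
  using F by (auto simp: subfield_C_def)

lemma subfield_C_uminus: "x \<in> F \<Longrightarrow> - x \<in> F"
  using F by (auto simp: subfield_C_def)

lemma subfield_C_inverse: "x \<in> F \<Longrightarrow> inverse x \<in> F"
  using F by (auto simp: subfield_C_def)

lemma subfield_C_divide: "x \<in> F \<Longrightarrow> y \<in> F \<Longrightarrow> x / y \<in> F"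
  using subfield_C_mult[of x "inverse y"] subfield_C_inverse[of y] by (simp add: divide_inverse)

lemma subfield_C_power: "x \<in> F \<Longrightarrow> x ^ n \<in> F"
  by (induction n) (auto intro: subfield_C_one subfield_C_mult)

lemma subfield_C_sum: "(\<And>i. i \<in> I \<Longrightarrow> f i \<in> F) \<Longrightarrow> sum f I \<in> F"
  by (induction I rule: infinite_finite_induct) (auto intro: subfield_C_zero subfield_C_add)

lemma subfield_C_prod: "(\<And>i. i \<in> I \<Longrightarrow> f i \<in> F) \<Longrightarrow> prod f I \<in> F"
  by (induction I rule: infinite_finite_induct) (auto intro: subfield_C_one subfield_C_mult)

lemma subfield_C_of_nat: "of_nat n \<in> F"
  by (induction n) (auto intro: subfield_C_zero subfield_C_one subfield_C_add)

lemma subfield_C_of_int: "of_int k \<in> F"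
  using subfield_C_of_nat[of "nat k"] subfield_C_uminus[OF subfield_C_of_nat[of "nat (- k)"]]
  by (cases "k \<ge> 0") simp_all

lemma subfield_C_of_rat: "of_rat q \<in> F"
proof -
  obtain a b where "q = Rat.Fract a b" "b > 0" by (cases q) auto
  thus ?thesis
    using of_rat_rat[of b a, where 'a = complex] subfield_C_divide[OF subfield_C_of_int subfield_C_of_int]
    by simp
qed

lemma alg_over_self: "x \<in> F \<Longrightarrow> alg_over F x"
  unfolding alg_over_def
  by (rule exI[of _ "[:-x, 1:]"])
    (auto simp: coeff_pCons split: nat.splits intro: subfield_C_uminus subfield_C_one subfield_C_zero)

end

lemma alg_over_mono: "F \<subseteq> G \<Longrightarrow> alg_over F x \<Longrightarrow> alg_over G x"
  unfolding alg_over_def by blast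

lemma subfield_C_gen_field: "subfield_C (gen_field S)"
  unfolding gen_field_def subfield_C_def by auto

lemma gen_field_superset: "S \<subseteq> gen_field S"
  unfolding gen_field_def by auto

lemma gen_field_least: "subfield_C F \<Longrightarrow> S \<subseteq> F \<Longrightarrow> gen_field S \<subseteq> F"
  unfolding gen_field_def by auto

lemma gen_field_mono: "S \<subseteq> S' \<Longrightarrow> gen_field S \<subseteq> gen_field S'"
  by (meson gen_field_superset gen_field_least subfield_C_gen_field order_trans)

section \<open>Algebraicity over a subfield\<close>

text \<open>Algebraicity with the annihilating polynomial given by a finite coefficient sequence,
  which makes clearing denominators and exchanging the roles of two variables elementary.\<close>

definition alg_over_sum :: "complex set \<Rightarrow> complex \<Rightarrow> bool" where
  "alg_over_sum K x \<longleftrightarrow> (\<exists>N c. (\<forall>i<N. c i \<in> K) \<and> (\<exists>i<N. c i \<noteq> 0) \<and> (\<Sum>i<N. c i * x ^ i) = 0)"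

lemma alg_over_sumI:
  "(\<forall>i<N. c i \<in> K) \<Longrightarrow> (\<exists>i<N. c i \<noteq> 0) \<Longrightarrow> (\<Sum>i<N. c i * x ^ i) = 0 \<Longrightarrow> alg_over_sum K x"
  unfolding alg_over_sum_def by blast

lemma poly_eq_sum_lessThan:
  fixes x :: complex
  assumes "Polynomial.degree p < N"
  shows "poly p x = (\<Sum>i<N. Polynomial.coeff p i * x ^ i)"
proof -
  have "poly p x = (\<Sum>i\<le>Polynomial.degree p. Polynomial.coeff p i * x ^ i)" by (rule poly_altdef)
  also have "\<dots> = (\<Sum>i<N. Polynomial.coeff p i * x ^ i)"
    by (rule sum.mono_neutral_left) (use assms coeff_eq_0 le_degree in auto)
  finally show ?thesis .
qed

lemma alg_over_iff_alg_over_sum: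
  assumes "0 \<in> K"
  shows "alg_over K x \<longleftrightarrow> alg_over_sum K x"
proof
  assume "alg_over K x"
  then obtain p where p: "p \<noteq> 0" "\<forall>i. Polynomial.coeff p i \<in> K" "poly p x = 0"
    unfolding alg_over_def by auto
  show "alg_over_sum K x"
  proof (rule alg_over_sumI[of "Suc (Polynomial.degree p)" "Polynomial.coeff p"])
    show "\<exists>i<Suc (Polynomial.degree p). Polynomial.coeff p i \<noteq> 0"
      using p(1) by (intro exI[of _ "Polynomial.degree p"]) auto
    show "(\<Sum>i<Suc (Polynomial.degree p). Polynomial.coeff p i * x ^ i) = 0"
      using poly_eq_sum_lessThan[of p "Suc (Polynomial.degree p)" x] p(3) by simp
  qed (use p in auto)
next
  assume "alg_over_sum K x"
  then obtain N c where c: "\<forall>i<N. c i \<in> K" "\<exists>i<N. c i \<noteq> 0" "(\<Sum>i<N. c i * x ^ i) = 0"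
    unfolding alg_over_sum_def by auto
  define p where "p = Poly (map c [0..<N])"
  have cp: "Polynomial.coeff p i = (if i < N then c i else 0)" for i
    unfolding p_def by (auto simp: nth_default_def)
  have "p \<noteq> 0" using c(2) cp by (metis coeff_0)
  moreover have "\<forall>i. Polynomial.coeff p i \<in> K" using cp c(1) assms by auto
  moreover have "Polynomial.degree p < N"
  proof -
    have "N > 0" using c(2) by auto
    moreover have "Polynomial.degree p \<le> N - 1" by (rule degree_le) (auto simp: cp)
    ultimately show ?thesis by auto
  qed
  hence "poly p x = 0" using poly_eq_sum_lessThan[of p N x] c(3) cp by simp
  ultimately show "alg_over K x" unfolding alg_over_def by auto
qed

text \<open>\<open>\<complex>\<close> as a ring in the sense of HOL-Algebra, whose theory of finite field extensions
  provides the transitivity of algebraicity.\<close>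

abbreviation complex_ring :: "complex ring" where
  "complex_ring \<equiv> ring_of_type_algebra"

lemma field_complex_ring: "field complex_ring"
  by (rule field_from_type_algebra)

lemma domain_complex_ring: "domain complex_ring"
  using field_complex_ring field.axioms(1) by blast

lemma ring_complex_ring: "ring complex_ring"
  using domain_complex_ring by (simp add: cring.axioms(1) domain.axioms(1))

lemma complex_ring_simps [simp]:
  "carrier complex_ring = UNIV" "(\<otimes>\<^bsub>complex_ring\<^esub>) = (*)" "(\<oplus>\<^bsub>complex_ring\<^esub>) = (+)"
  "\<zero>\<^bsub>complex_ring\<^esub> = 0" "\<one>\<^bsub>complex_ring\<^esub> = 1"
  by (auto simp: ring_of_type_algebra_def)

lemma complex_ring_pow [simp]: "x [^]\<^bsub>complex_ring\<^esub> (n::nat) = x ^ n"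
  by (induction n) auto

lemma complex_ring_uminus [simp]: "\<ominus>\<^bsub>complex_ring\<^esub> x = - x"
  using abelian_group.minus_equality[OF ring.is_abelian_group[OF ring_complex_ring], of "- x" x] by simp

lemma complex_ring_inv [simp]: "x \<noteq> 0 \<Longrightarrow> inv\<^bsub>complex_ring\<^esub> x = inverse x"
  using comm_monoid.comm_inv_char[OF cring.axioms(2)[OF domain.axioms(1)[OF domain_complex_ring]],
      of x "inverse x"]
  by simp

lemma complex_ring_eval_simps [simp]:
  "ring.eval complex_ring [] x = 0"
  "ring.eval complex_ring (a # p) x = a * x ^ length p + ring.eval complex_ring p x"
  using ring.eval.simps[OF ring_complex_ring] by simp_all

lemma complex_ring_coeff_simps [simp]:
  "ring.coeff complex_ring [] i = 0"
  "ring.coeff complex_ring (a # p) i = (if i = length p then a else ring.coeff complex_ring p i)"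
  using ring.coeff.simps[OF ring_complex_ring] by simp_all

lemma complex_ring_normalize_simps [simp]:
  "ring.normalize complex_ring [] = []"
  "ring.normalize complex_ring (a # p) = (if a \<noteq> 0 then a # p else ring.normalize complex_ring p)"
  using ring.normalize.simps[OF ring_complex_ring] by simp_all

lemma complex_ring_eval: "ring.eval complex_ring p x = (\<Sum>i<length p. ring.coeff complex_ring p i * x ^ i)"
  by (induction p) (simp_all add: add.commute)

lemma subfield_complex_ring_iff: "subfield K complex_ring \<longleftrightarrow> subfield_C K"
proof
  assume K: "subfield K complex_ring"
  note K_subring = subringE[OF subfieldE(1)[OF K], simplified]
  have "inverse k \<in> K" if "k \<in> K" for k
    using K_subring ring.subfield_m_inv(1)[OF ring_complex_ring K, of k] that
    by (cases "k = 0") simp_all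
  then show "subfield_C K" unfolding subfield_C_def using K_subring by auto
next
  assume "subfield_C K"
  then show "subfield K complex_ring" unfolding subfield_C_def
    by (intro field.subfieldI'[OF field_complex_ring] ring.subringI[OF ring_complex_ring]) auto
qed

lemma not_transcendental_iff_alg_over_sum:
  assumes K: "subfield K complex_ring"
  shows "\<not> ring.transcendental complex_ring K x \<longleftrightarrow> alg_over_sum K x"
proof
  assume "\<not> ring.transcendental complex_ring K x"
  then obtain p where p: "p \<in> carrier (K[X]\<^bsub>complex_ring\<^esub>)" "p \<noteq> []" "ring.eval complex_ring p x = 0"
    using domain.algebraicE[OF domain_complex_ring subfieldE(1)[OF K], of x] by (auto simp: over_def)
  have pol: "polynomial\<^bsub>complex_ring\<^esub> K p" using p(1) by (simp add: univ_poly_carrier)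
  have lead: "ring.coeff complex_ring p (length p - 1) \<noteq> 0"
    using pol p(2) unfolding polynomial_def by (cases p) auto
  show "alg_over_sum K x"
  proof (rule alg_over_sumI[of "length p" "ring.coeff complex_ring p"])
    show "\<forall>i<length p. ring.coeff complex_ring p i \<in> K"
      using ring.polynomial_incl[OF ring_complex_ring pol] by (auto simp: ring.coeff_nth[OF ring_complex_ring])
    show "\<exists>i<length p. ring.coeff complex_ring p i \<noteq> 0"
      using p(2) lead by (intro exI[of _ "length p - 1"]) auto
    show "(\<Sum>i<length p. ring.coeff complex_ring p i * x ^ i) = 0"
      using p(3) complex_ring_eval by simp
  qed
next
  assume "alg_over_sum K x"
  then obtain N c where c: "\<forall>i<N. c i \<in> K" "\<exists>i<N. c i \<noteq> 0" "(\<Sum>i<N. c i * x ^ i) = 0"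
    unfolding alg_over_sum_def by auto
  define q where "q = rev (map c [0..<N])"
  have "ring.coeff complex_ring q i = c i" if "i < N" for i
    using that by (simp add: ring.coeff_nth[OF ring_complex_ring] q_def rev_nth)
  hence "ring.eval complex_ring q x = 0"
    using complex_ring_eval[of q x] c(3) by (simp add: q_def)
  have "set p \<subseteq> {0}" if "ring.normalize complex_ring p = []" for p :: "complex list"
    using that by (induction p) (auto split: if_splits)
  hence "ring.normalize complex_ring q \<noteq> []"
    using c(2) by (force simp: q_def)
  moreover have "ring.normalize complex_ring q \<in> carrier (K[X]\<^bsub>complex_ring\<^esub>)"
    using ring.normalize_gives_polynomial[OF ring_complex_ring, of q K] c(1)
    by (auto simp: univ_poly_carrier q_def image_subset_iff)
  moreover have "ring.eval complex_ring (ring.normalize complex_ring q) x = 0"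
    using ring.eval_normalize[OF ring_complex_ring, of q x] \<open>ring.eval complex_ring q x = 0\<close> by simp
  ultimately show "\<not> ring.transcendental complex_ring K x"
    using ring.algebraicI[OF ring_complex_ring, of "ring.normalize complex_ring q" K x]
    by (auto simp: over_def)
qed

lemma alg_over_iff_not_transcendental:
  "subfield_C K \<Longrightarrow> alg_over K x \<longleftrightarrow> \<not> ring.transcendental complex_ring K x"
  using alg_over_iff_alg_over_sum[OF subfield_C_zero] not_transcendental_iff_alg_over_sum
    subfield_complex_ring_iff
  by blast

text \<open>A root of a polynomial with algebraic coefficients lies in a finite-dimensional
  extension, hence is algebraic.\<close>

lemma complex_ring_algebraic_trans:
  assumes K: "subfield K complex_ring" and F: "subfield F complex_ring"
    and alg_F: "\<forall>y\<in>F. \<not> ring.transcendental complex_ring K y"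
    and x: "\<not> ring.transcendental complex_ring F x"
  shows "\<not> ring.transcendental complex_ring K x"
proof -
  obtain p where p: "p \<in> carrier (F[X]\<^bsub>complex_ring\<^esub>)" "p \<noteq> []" "ring.eval complex_ring p x = 0"
    using domain.algebraicE[OF domain_complex_ring subfieldE(1)[OF F], of x] x by (auto simp: over_def)
  have pol: "polynomial\<^bsub>complex_ring\<^esub> F p" using p(1) by (simp add: univ_poly_carrier)
  define E where "E = ring.finite_extension complex_ring K p"
  have alg_p: "\<And>y. y \<in> set p \<Longrightarrow> ((\<lambda>K x. \<not> ring.transcendental complex_ring K x) over K) y"
    using alg_F ring.polynomial_incl[OF ring_complex_ring pol] by (auto simp: over_def)
  have E: "subfield E complex_ring"
    unfolding E_def by (rule domain.finite_extension_is_subfield[OF domain_complex_ring K _ alg_p]) auto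
  have dim_E: "ring.finite_dimension complex_ring K E"
    unfolding E_def
    by (rule domain.finite_extension_finite_dimension(1)[OF domain_complex_ring K _ alg_p]) auto
  have "set p \<subseteq> E" unfolding E_def
    by (rule domain.finite_extension_mem[OF domain_complex_ring subfieldE(1)[OF K]]) auto
  hence "polynomial\<^bsub>complex_ring\<^esub> E p" using pol unfolding polynomial_def by auto
  hence "\<not> ring.transcendental complex_ring E x"
    using ring.algebraicI[OF ring_complex_ring, of p E x] p by (auto simp: univ_poly_carrier over_def)
  hence "ring.finite_dimension complex_ring E (ring.simple_extension complex_ring E x)"
    using domain.finite_dimension_simple_extension[OF domain_complex_ring E, of x] by (simp add: over_def)
  hence "ring.finite_dimension complex_ring K (ring.simple_extension complex_ring E x)"
    using ring.telescopic_base_dim(1)[OF ring_complex_ring K E dim_E] by blast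
  moreover have "subring (ring.simple_extension complex_ring E x) complex_ring"
    using domain.simple_extension_is_subring[OF domain_complex_ring subfieldE(1)[OF E]] by simp
  moreover have "x \<in> ring.simple_extension complex_ring E x"
    using ring.simple_extension_mem[OF ring_complex_ring subfieldE(1)[OF E]] by simp
  ultimately show ?thesis
    using ring.finite_dimension_imp_algebraic[OF ring_complex_ring K] by (auto simp: over_def)
qed

lemma alg_over_trans:
  assumes "subfield_C K" "subfield_C F" "\<forall>y\<in>F. alg_over K y" "alg_over F x"
  shows "alg_over K x"
  using assms complex_ring_algebraic_trans[of K F x] subfield_complex_ring_iff
    alg_over_iff_not_transcendental
  by metis

lemma subfield_C_alg_over: "subfield_C K \<Longrightarrow> subfield_C {x. alg_over K x}"
  using field.subfield_of_algebraics[OF field_complex_ring, of K] subfield_complex_ring_iff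
    alg_over_iff_not_transcendental[of K]
  by (simp add: over_def)

section \<open>The algebraic closure operator and the exchange lemma\<close>

definition acl :: "complex set \<Rightarrow> complex set" where
  "acl T = {x. alg_over (gen_field T) x}"

lemma subfield_C_acl: "subfield_C (acl T)"
  unfolding acl_def by (rule subfield_C_alg_over[OF subfield_C_gen_field])

lemma gen_field_subset_acl: "gen_field T \<subseteq> acl T"
  unfolding acl_def using alg_over_self[OF subfield_C_gen_field] by auto

lemma subset_acl: "T \<subseteq> acl T"
  using gen_field_subset_acl gen_field_superset by blast

lemma acl_mono: "T \<subseteq> T' \<Longrightarrow> acl T \<subseteq> acl T'"
  unfolding acl_def using alg_over_mono gen_field_mono by blast

lemma alg_over_imp_in_acl:
  assumes "subfield_C F" "F \<subseteq> acl T" "alg_over F x"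
  shows "x \<in> acl T"
  using alg_over_trans[OF subfield_C_gen_field assms(1) _ assms(3)] assms(2) unfolding acl_def by blast

lemma acl_subset_acl: "A \<subseteq> acl T \<Longrightarrow> acl A \<subseteq> acl T"
  using alg_over_imp_in_acl[OF subfield_C_gen_field] gen_field_least[OF subfield_C_acl]
  unfolding acl_def by blast

lemma algebraic_in_acl:
  assumes "algebraic b"
  shows "b \<in> acl T"
proof -
  obtain p where p: "\<And>i. Polynomial.coeff p i \<in> \<int>" "p \<noteq> 0" "poly p b = 0"
    using algebraicE[OF assms] by blast
  have "\<forall>i. Polynomial.coeff p i \<in> gen_field T"
    using p(1) subfield_C_of_int[OF subfield_C_gen_field] by (metis Ints_cases)
  thus ?thesis unfolding acl_def alg_over_def using p by blast
qed

definition subring_C :: "complex set \<Rightarrow> bool" where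
  "subring_C R \<longleftrightarrow> 0 \<in> R \<and> 1 \<in> R \<and> (\<forall>x\<in>R. \<forall>y\<in>R. x + y \<in> R \<and> x * y \<in> R) \<and> (\<forall>x\<in>R. - x \<in> R)"

definition fractions :: "complex set \<Rightarrow> complex set" where
  "fractions R = {u / v | u v. u \<in> R \<and> v \<in> R \<and> v \<noteq> 0}"

lemma fractionsI: "u \<in> R \<Longrightarrow> v \<in> R \<Longrightarrow> v \<noteq> 0 \<Longrightarrow> u / v \<in> fractions R"
  unfolding fractions_def by blast

lemma fractionsE:
  assumes "x \<in> fractions R"
  obtains u v where "x = u / v" "u \<in> R" "v \<in> R" "v \<noteq> 0"
  using assms unfolding fractions_def by blast

lemma subset_fractions: "subring_C R \<Longrightarrow> R \<subseteq> fractions R"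
  using fractionsI[of _ R 1] unfolding subring_C_def by force

lemma subfield_C_fractions:
  assumes R: "subring_C R"
  shows "subfield_C (fractions R)"
proof -
  have R_closed: "0 \<in> R" "1 \<in> R" "\<And>x y. x \<in> R \<Longrightarrow> y \<in> R \<Longrightarrow> x + y \<in> R"
    "\<And>x y. x \<in> R \<Longrightarrow> y \<in> R \<Longrightarrow> x * y \<in> R" "\<And>x. x \<in> R \<Longrightarrow> - x \<in> R"
    using R unfolding subring_C_def by auto
  have "x + y \<in> fractions R \<and> x * y \<in> fractions R" if xy: "x \<in> fractions R" "y \<in> fractions R" for x y
  proof -
    obtain u v where x: "x = u / v" "u \<in> R" "v \<in> R" "v \<noteq> 0" using xy(1) by (rule fractionsE)
    obtain u' v' where y: "y = u' / v'" "u' \<in> R" "v' \<in> R" "v' \<noteq> 0" using xy(2) by (rule fractionsE)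
    have "x + y = (u * v' + u' * v) / (v * v')" "x * y = (u * u') / (v * v')"
      using x y by (simp add: field_simps, simp)
    then show ?thesis using x y R_closed fractionsI by simp
  qed
  moreover have "- x \<in> fractions R \<and> inverse x \<in> fractions R" if x_frac: "x \<in> fractions R" for x
  proof -
    obtain u v where x: "x = u / v" "u \<in> R" "v \<in> R" "v \<noteq> 0" using x_frac by (rule fractionsE)
    have "- x = (- u) / v" "inverse x = (if u = 0 then 0 / 1 else v / u)" using x by simp_all
    then show ?thesis using x R_closed fractionsI[of _ R] by (metis one_neq_zero)
  qed
  ultimately show ?thesis
    using subset_fractions[OF R] R_closed(1,2) unfolding subfield_C_def by blast
qed

lemma common_denominator:
  fixes N :: nat
  assumes R: "subring_C R" and c: "\<forall>i<N. c i \<in> fractions R"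
  shows "\<exists>v\<in>R. v \<noteq> 0 \<and> (\<forall>i<N. c i * v \<in> R)"
  using c
proof (induction N)
  case 0
  then show ?case using R unfolding subring_C_def by (intro bexI[of _ 1]) auto
next
  case (Suc N)
  then obtain v where v: "v \<in> R" "v \<noteq> 0" "\<forall>i<N. c i * v \<in> R" by auto
  obtain u w where uw: "c N = u / w" "u \<in> R" "w \<in> R" "w \<noteq> 0"
    using Suc.prems by (meson fractionsE lessI)
  have R_mult: "\<And>x y. x \<in> R \<Longrightarrow> y \<in> R \<Longrightarrow> x * y \<in> R" using R unfolding subring_C_def by auto
  have "c i * (v * w) \<in> R" if "i < Suc N" for i
  proof (cases "i = N")
    case True
    then show ?thesis using R_mult uw(2) v(1) uw by (simp add: mult.commute)
  next
    case False
    then show ?thesis using R_mult v(3) uw(3) that by (metis less_SucE mult.assoc)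
  qed
  then show ?case using v uw R_mult by (intro bexI[of _ "v * w"]) auto
qed

lemma acl_imp_alg_over_sum_subring:
  assumes R: "subring_C R" and "S \<subseteq> R" and "x \<in> acl S"
  shows "alg_over_sum R x"
proof -
  have "gen_field S \<subseteq> fractions R"
    using assms(2) subset_fractions[OF R] by (intro gen_field_least[OF subfield_C_fractions[OF R]]) auto
  hence "alg_over_sum (fractions R) x"
    using assms(3) alg_over_mono alg_over_iff_alg_over_sum subfield_C_zero[OF subfield_C_fractions[OF R]]
    unfolding acl_def by blast
  then obtain N c where c: "\<forall>i<N. c i \<in> fractions R" "\<exists>i<N. c i \<noteq> 0" "(\<Sum>i<N. c i * x ^ i) = 0"
    unfolding alg_over_sum_def by auto
  obtain v where v: "v \<in> R" "v \<noteq> 0" "\<forall>i<N. c i * v \<in> R" using common_denominator[OF R c(1)] by auto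
  have "(\<Sum>i<N. (c i * v) * x ^ i) = v * (\<Sum>i<N. c i * x ^ i)"
    by (simp add: sum_distrib_left mult_ac)
  then show ?thesis using v c by (intro alg_over_sumI[of N "\<lambda>i. c i * v"]) auto
qed

lemma subring_C_poly_values:
  assumes K: "subfield_C K"
  shows "subring_C {poly p y | p. \<forall>i. Polynomial.coeff p i \<in> K}" (is "subring_C ?R")
proof -
  have R_poly: "poly p y \<in> ?R" if "\<forall>i. Polynomial.coeff p i \<in> K" for p
    using that by blast
  have "0 \<in> ?R" "1 \<in> ?R"
    using R_poly[of 0] R_poly[of 1] subfield_C_zero[OF K] subfield_C_one[OF K] by (auto simp: coeff_1)
  moreover have "a + b \<in> ?R \<and> a * b \<in> ?R \<and> - a \<in> ?R" if ab: "a \<in> ?R" "b \<in> ?R" for a b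
  proof -
    obtain p where p: "a = poly p y" "\<forall>i. Polynomial.coeff p i \<in> K" using ab(1) by blast
    obtain q where q: "b = poly q y" "\<forall>i. Polynomial.coeff q i \<in> K" using ab(2) by blast
    have "\<forall>i. Polynomial.coeff (p + q) i \<in> K" "\<forall>i. Polynomial.coeff (- p) i \<in> K"
      using p q subfield_C_add[OF K] subfield_C_uminus[OF K] by simp_all
    moreover have "\<forall>i. Polynomial.coeff (p * q) i \<in> K"
      using p q by (auto simp: coeff_mult intro!: subfield_C_sum[OF K] subfield_C_mult[OF K])
    ultimately show ?thesis using p q R_poly[of "p + q"] R_poly[of "p * q"] R_poly[of "- p"] by simp
  qed
  ultimately show ?thesis unfolding subring_C_def by blast
qed

lemma sum_poly_power_swap:
  fixes x y :: complex
  assumes "\<forall>i<N. Polynomial.degree (r i) < M"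
  shows "(\<Sum>j<M. (\<Sum>i<N. Polynomial.coeff (r i) j * x ^ i) * y ^ j) = (\<Sum>i<N. poly (r i) y * x ^ i)"
proof -
  have "(\<Sum>j<M. (\<Sum>i<N. Polynomial.coeff (r i) j * x ^ i) * y ^ j) = (\<Sum>i<N. (\<Sum>j<M. Polynomial.coeff (r i) j * y ^ j) * x ^ i)"
    by (simp add: sum_distrib_left sum_distrib_right mult_ac sum.swap[of _ "{..<M}"])
  also have "\<dots> = (\<Sum>i<N. poly (r i) y * x ^ i)"
    using assms poly_eq_sum_lessThan by (intro sum.cong) auto
  finally show ?thesis .
qed

lemma polys_eq_0_if_not_alg_over_sum:
  assumes "\<not> alg_over_sum K x" and "\<forall>i<N. \<forall>j. Polynomial.coeff (r i) j \<in> K"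
    and "\<forall>i<N. Polynomial.degree (r i) < M" and "\<forall>j<M. (\<Sum>i<N. Polynomial.coeff (r i) j * x ^ i) = 0"
  shows "\<forall>i<N. r i = 0"
proof (intro allI impI poly_eqI)
  fix i j assume i: "i < N"
  show "Polynomial.coeff (r i) j = Polynomial.coeff 0 j"
  proof (cases "j < M")
    case True
    then show ?thesis
      using assms(1,2,4) i alg_over_sumI[of N "\<lambda>i. Polynomial.coeff (r i) j" K x] by auto
  next
    case False
    then have "Polynomial.degree (r i) < j" using assms(3) i by (meson not_less less_le_trans)
    then show ?thesis by (simp add: coeff_eq_0)
  qed
qed

text \<open>Exchange: if \<open>x\<close> is algebraic over \<open>\<rat>(A, y)\<close> but not over \<open>\<rat>(A)\<close>, write the
  annihilating polynomial of \<open>x\<close> with coefficients in \<open>K[y]\<close>, \<open>K = \<rat>(A)\<close>, and read it as a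
  polynomial in \<open>y\<close> with coefficients in \<open>K[x]\<close>; it stays nonzero because \<open>x\<close> is
  transcendental over \<open>K\<close>.\<close>

lemma acl_exchange:
  assumes x: "x \<in> acl (insert y A)" and not_x: "x \<notin> acl A"
  shows "y \<in> acl (insert x A)"
proof -
  define K where "K = gen_field A"
  have K: "subfield_C K" unfolding K_def by (rule subfield_C_gen_field)
  define Ky where "Ky = {poly p y | p. \<forall>i. Polynomial.coeff p i \<in> K}"
  have Ky: "subring_C Ky" unfolding Ky_def by (rule subring_C_poly_values[OF K])
  have "insert y A \<subseteq> Ky"
  proof -
    have "k \<in> Ky" if "k \<in> K" for k
      using that subfield_C_zero[OF K] unfolding Ky_def
      by (intro CollectI exI[of _ "[:k:]"]) (auto simp: coeff_pCons split: nat.splits)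
    moreover have "y \<in> Ky"
      using subfield_C_zero[OF K] subfield_C_one[OF K] unfolding Ky_def
      by (intro CollectI exI[of _ "[:0, 1:]"]) (auto simp: coeff_pCons split: nat.splits)
    ultimately show ?thesis using gen_field_superset[of A] unfolding K_def by blast
  qed
  with acl_imp_alg_over_sum_subring[OF Ky _ x] have "alg_over_sum Ky x" by simp
  then obtain N c where c: "\<forall>i<N. c i \<in> Ky" "\<exists>i<N. c i \<noteq> 0" "(\<Sum>i<N. c i * x ^ i) = 0"
    unfolding alg_over_sum_def by blast
  have "\<forall>i. \<exists>r. i < N \<longrightarrow> c i = poly r y \<and> (\<forall>j. Polynomial.coeff r j \<in> K)"
    using c(1) unfolding Ky_def by blast
  then obtain r where r: "\<forall>i<N. c i = poly (r i) y" "\<forall>i<N. \<forall>j. Polynomial.coeff (r i) j \<in> K"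
    by metis
  define M where "M = Suc (\<Sum>i<N. Polynomial.degree (r i))"
  have deg: "\<forall>i<N. Polynomial.degree (r i) < M"
    unfolding M_def using member_le_sum[of _ "{..<N}" "\<lambda>i. Polynomial.degree (r i)"]
    by (simp add: le_imp_less_Suc)
  define s where "s j = (\<Sum>i<N. Polynomial.coeff (r i) j * x ^ i)" for j
  have not_alg: "\<not> alg_over_sum K x"
    using not_x alg_over_iff_alg_over_sum[OF subfield_C_zero[OF K]] unfolding acl_def K_def by blast
  have "\<exists>j<M. s j \<noteq> 0"
  proof (rule ccontr)
    assume "\<not> (\<exists>j<M. s j \<noteq> 0)"
    hence "\<forall>i<N. r i = 0"
      using polys_eq_0_if_not_alg_over_sum[OF not_alg r(2) deg] unfolding s_def by blast
    thus False using c(2) r(1) by auto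
  qed
  moreover have "(\<Sum>j<M. s j * y ^ j) = 0"
    unfolding s_def sum_poly_power_swap[OF deg] using c(3) r(1) by simp
  moreover have "\<forall>j<M. s j \<in> gen_field (insert x A)"
  proof -
    note F = subfield_C_gen_field[of "insert x A"]
    have "K \<subseteq> gen_field (insert x A)" unfolding K_def by (rule gen_field_mono) auto
    moreover have "x \<in> gen_field (insert x A)" using gen_field_superset by blast
    ultimately show ?thesis unfolding s_def using r(2)
      by (auto intro!: subfield_C_sum[OF F] subfield_C_mult[OF F] subfield_C_power[OF F])
  qed
  ultimately have "alg_over_sum (gen_field (insert x A)) y"
    using alg_over_sumI[of M s] by blast
  then show ?thesis
    using alg_over_iff_alg_over_sum[OF subfield_C_zero[OF subfield_C_gen_field]] unfolding acl_def by blast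
qed

text \<open>The head of the sequence is exchanged against an element of a minimal subset \<open>U\<close> of \<open>T\<close>
  with the head algebraic over \<open>B \<union> U\<close>.\<close>

lemma steinitz_exchange:
  "finite T \<Longrightarrow> (\<forall>j<length s. s ! j \<in> acl (B \<union> T) \<and> s ! j \<notin> acl (B \<union> set (take j s)))
   \<Longrightarrow> length s \<le> card T"
proof (induction s arbitrary: B T)
  case Nil
  then show ?case by simp
next
  case (Cons a s)
  have a: "a \<in> acl (B \<union> T)" "a \<notin> acl B" using Cons.prems(2) by (auto dest: spec[of _ 0])
  define P where "P U \<longleftrightarrow> U \<subseteq> T \<and> a \<in> acl (B \<union> U)" for U
  obtain U where U: "P U" "\<And>U'. P U' \<Longrightarrow> card U \<le> card U'"
    using ex_has_least_nat[of P T card] a unfolding P_def by blast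
  have UT: "U \<subseteq> T" and aU: "a \<in> acl (B \<union> U)" using U(1) unfolding P_def by auto
  have finU: "finite U" using UT Cons.prems(1) finite_subset by blast
  obtain t where t: "t \<in> U" using aU a(2) by fastforce
  have "\<not> P (U - {t})"
    using U(2)[of "U - {t}"] card_Diff1_less[OF finU t] by linarith
  hence "a \<notin> acl (B \<union> (U - {t}))" using UT unfolding P_def by blast
  moreover have "B \<union> U = insert t (B \<union> (U - {t}))" using t by blast
  ultimately have "t \<in> acl (insert a (B \<union> (U - {t})))" using acl_exchange aU by metis
  define B' where "B' = insert a B"
  define T' where "T' = T - {t}"
  have "t \<in> acl (B' \<union> T')"
    using \<open>t \<in> acl _\<close> acl_mono[of "insert a (B \<union> (U - {t}))" "B' \<union> T'"] UT
    unfolding B'_def T'_def by blast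
  hence "B \<union> T \<subseteq> acl (B' \<union> T')"
    using subset_acl[of "B' \<union> T'"] unfolding B'_def T'_def by blast
  hence span: "acl (B \<union> T) \<subseteq> acl (B' \<union> T')" by (rule acl_subset_acl)
  have "\<forall>j<length s. s ! j \<in> acl (B' \<union> T') \<and> s ! j \<notin> acl (B' \<union> set (take j s))"
  proof (intro allI impI)
    fix j assume j: "j < length s"
    have "B \<union> set (take (Suc j) (a # s)) = B' \<union> set (take j s)" unfolding B'_def by auto
    then show "s ! j \<in> acl (B' \<union> T') \<and> s ! j \<notin> acl (B' \<union> set (take j s))"
      using Cons.prems(2) j span by (metis Suc_mono length_Cons nth_Cons_Suc subsetD)
  qed
  hence "length s \<le> card T'" using Cons.IH[of T' B'] Cons.prems(1) unfolding T'_def by blast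
  moreover have "card T' = card T - 1" "card T \<ge> 1"
    unfolding T'_def using t UT Cons.prems(1) card_gt_0_iff[of T]
    by (auto simp: card_Diff_singleton subsetD)
  ultimately show ?case by simp
qed

section \<open>Multivariate polynomials and algebraic independence\<close>

type_synonym rat_mpoly = "(nat \<Rightarrow>\<^sub>0 nat) \<Rightarrow>\<^sub>0 rat"

definition monomial_eval :: "(nat \<Rightarrow>\<^sub>0 nat) \<Rightarrow> (nat \<Rightarrow> complex) \<Rightarrow> complex" where
  "monomial_eval \<mu> x = (\<Prod>i\<in>Poly_Mapping.keys \<mu>. x i ^ Poly_Mapping.lookup \<mu> i)"

lemma mpoly_eval_monomials: "mpoly_eval p x = (\<Sum>\<mu>\<in>Poly_Mapping.keys p. of_rat (Poly_Mapping.lookup p \<mu>) * monomial_eval \<mu> x)"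
  unfolding mpoly_eval_def monomial_eval_def ..

lemma monomial_eval_superset:
  assumes "finite A" "Poly_Mapping.keys \<mu> \<subseteq> A"
  shows "monomial_eval \<mu> x = (\<Prod>i\<in>A. x i ^ Poly_Mapping.lookup \<mu> i)"
  unfolding monomial_eval_def
  by (rule prod.mono_neutral_left[OF assms(1,2)]) (auto simp: in_keys_iff)

lemma keys_add_nat: "Poly_Mapping.keys ((\<mu>::nat \<Rightarrow>\<^sub>0 nat) + \<nu>) = Poly_Mapping.keys \<mu> \<union> Poly_Mapping.keys \<nu>"
  by (auto simp: in_keys_iff lookup_add)

lemma monomial_eval_add: "monomial_eval (\<mu> + \<nu>) x = monomial_eval \<mu> x * monomial_eval \<nu> x"
proof -
  let ?A = "Poly_Mapping.keys \<mu> \<union> Poly_Mapping.keys \<nu>"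
  have "monomial_eval (\<mu> + \<nu>) x = (\<Prod>i\<in>?A. x i ^ Poly_Mapping.lookup (\<mu> + \<nu>) i)"
    by (rule monomial_eval_superset) (auto simp: keys_add_nat)
  also have "\<dots> = (\<Prod>i\<in>?A. x i ^ Poly_Mapping.lookup \<mu> i) * (\<Prod>i\<in>?A. x i ^ Poly_Mapping.lookup \<nu> i)"
    by (simp add: lookup_add power_add prod.distrib)
  also have "\<dots> = monomial_eval \<mu> x * monomial_eval \<nu> x"
    by (subst (1 2) monomial_eval_superset[where A = ?A]) auto
  finally show ?thesis .
qed

lemma monomial_eval_zero[simp]: "monomial_eval 0 x = 1" by (simp add: monomial_eval_def)

lemma monomial_eval_single[simp]: "monomial_eval (Poly_Mapping.single i n) x = x i ^ n"
  by (cases "n = 0") (auto simp: monomial_eval_def)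

lemma mpoly_eval_superset:
  assumes "finite A" "Poly_Mapping.keys p \<subseteq> A"
  shows "mpoly_eval p x = (\<Sum>\<mu>\<in>A. of_rat (Poly_Mapping.lookup p \<mu>) * monomial_eval \<mu> x)"
  unfolding mpoly_eval_monomials
  by (rule sum.mono_neutral_left[OF assms(1,2)]) (auto simp: in_keys_iff)

lemma mpoly_eval_zero[simp]: "mpoly_eval 0 x = 0" by (simp add: mpoly_eval_def)

lemma mpoly_eval_add: "mpoly_eval (p + q) x = mpoly_eval p x + mpoly_eval q x"
proof -
  let ?A = "Poly_Mapping.keys p \<union> Poly_Mapping.keys q"
  have "mpoly_eval (p + q) x = (\<Sum>\<mu>\<in>?A. of_rat (Poly_Mapping.lookup (p + q) \<mu>) * monomial_eval \<mu> x)"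
    by (rule mpoly_eval_superset) (use keys_add[of p q] in auto)
  also have "\<dots> = (\<Sum>\<mu>\<in>?A. of_rat (Poly_Mapping.lookup p \<mu>) * monomial_eval \<mu> x) + (\<Sum>\<mu>\<in>?A. of_rat (Poly_Mapping.lookup q \<mu>) * monomial_eval \<mu> x)"
    by (simp add: lookup_add of_rat_add distrib_right sum.distrib)
  also have "\<dots> = mpoly_eval p x + mpoly_eval q x"
    by (subst (1 2) mpoly_eval_superset[where A = ?A]) auto
  finally show ?thesis .
qed

lemma mpoly_eval_uminus: "mpoly_eval (- p) x = - mpoly_eval p x"
  by (simp add: mpoly_eval_monomials of_rat_minus sum_negf)

lemma mpoly_eval_sum: "mpoly_eval (\<Sum>i\<in>I. f i) x = (\<Sum>i\<in>I. mpoly_eval (f i) x)"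
  by (induction I rule: infinite_finite_induct) (auto simp: mpoly_eval_add)

lemma mpoly_eval_single: "mpoly_eval (Poly_Mapping.single \<mu> c) x = of_rat c * monomial_eval \<mu> x"
  by (simp add: mpoly_eval_monomials)

lemma poly_mapping_sum_single: "p = (\<Sum>\<mu>\<in>Poly_Mapping.keys p. Poly_Mapping.single \<mu> (Poly_Mapping.lookup p \<mu>))"
proof (rule poly_mapping_eqI)
  fix \<nu>
  have "Poly_Mapping.lookup (\<Sum>\<mu>\<in>Poly_Mapping.keys p. Poly_Mapping.single \<mu> (Poly_Mapping.lookup p \<mu>)) \<nu>
      = (\<Sum>\<mu>\<in>Poly_Mapping.keys p. (Poly_Mapping.lookup p \<mu> when \<mu> = \<nu>))"
    by (simp add: lookup_sum lookup_single)
  also have "\<dots> = (\<Sum>\<mu>\<in>Poly_Mapping.keys p. (if \<mu> = \<nu> then Poly_Mapping.lookup p \<nu> else 0))"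
    by (rule sum.cong) (auto simp: when_def)
  also have "\<dots> = Poly_Mapping.lookup p \<nu>"
    by (simp add: in_keys_iff)
  finally show "Poly_Mapping.lookup p \<nu> = Poly_Mapping.lookup (\<Sum>\<mu>\<in>Poly_Mapping.keys p. Poly_Mapping.single \<mu> (Poly_Mapping.lookup p \<mu>)) \<nu>"
    by simp
qed

lemma mpoly_eval_single_mult:
  "mpoly_eval (Poly_Mapping.single \<mu> c * q) x = of_rat c * monomial_eval \<mu> x * mpoly_eval q x"
proof -
  have "Poly_Mapping.single \<mu> c * q = (\<Sum>\<nu>\<in>Poly_Mapping.keys q. Poly_Mapping.single \<mu> c * Poly_Mapping.single \<nu> (Poly_Mapping.lookup q \<nu>))"
    by (subst poly_mapping_sum_single[of q]) (simp add: sum_distrib_left)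
  also have "\<dots> = (\<Sum>\<nu>\<in>Poly_Mapping.keys q. Poly_Mapping.single (\<mu> + \<nu>) (c * Poly_Mapping.lookup q \<nu>))"
    by (simp add: mult_single)
  finally have "mpoly_eval (Poly_Mapping.single \<mu> c * q) x
     = (\<Sum>\<nu>\<in>Poly_Mapping.keys q. of_rat (c * Poly_Mapping.lookup q \<nu>) * monomial_eval (\<mu> + \<nu>) x)"
    by (simp add: mpoly_eval_sum mpoly_eval_single)
  also have "\<dots> = of_rat c * monomial_eval \<mu> x * (\<Sum>\<nu>\<in>Poly_Mapping.keys q. of_rat (Poly_Mapping.lookup q \<nu>) * monomial_eval \<nu> x)"
    by (simp add: of_rat_mult monomial_eval_add sum_distrib_left mult_ac)
  finally show ?thesis by (simp add: mpoly_eval_monomials)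
qed

lemma mpoly_eval_mult: "mpoly_eval (p * q) x = mpoly_eval p x * mpoly_eval q x"
proof -
  have "mpoly_eval (p * q) x = (\<Sum>\<mu>\<in>Poly_Mapping.keys p. mpoly_eval (Poly_Mapping.single \<mu> (Poly_Mapping.lookup p \<mu>) * q) x)"
    by (subst poly_mapping_sum_single[of p]) (simp add: sum_distrib_right mpoly_eval_sum)
  also have "\<dots> = (\<Sum>\<mu>\<in>Poly_Mapping.keys p. of_rat (Poly_Mapping.lookup p \<mu>) * monomial_eval \<mu> x) * mpoly_eval q x"
    by (simp add: mpoly_eval_single_mult sum_distrib_right)
  finally show ?thesis by (simp add: mpoly_eval_monomials)
qed

lemma mpoly_eval_one [simp]: "mpoly_eval 1 x = 1"
  by (simp add: mpoly_eval_monomials lookup_one)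

definition vars_in :: "rat_mpoly \<Rightarrow> nat set \<Rightarrow> bool" where
  "vars_in p I \<longleftrightarrow> (\<forall>\<mu>\<in>Poly_Mapping.keys p. Poly_Mapping.keys \<mu> \<subseteq> I)"

lemma alg_indep_Q_iff_vars_in: "alg_indep_Q I x \<longleftrightarrow> (\<forall>p. vars_in p I \<longrightarrow> mpoly_eval p x = 0 \<longrightarrow> p = 0)"
  unfolding alg_indep_Q_def vars_in_def ..

lemma vars_in_add: "vars_in p I \<Longrightarrow> vars_in q I \<Longrightarrow> vars_in (p + q) I"
  using keys_add[of p q] unfolding vars_in_def by blast

lemma vars_in_mult: "vars_in p I \<Longrightarrow> vars_in q I \<Longrightarrow> vars_in (p * q) I"
proof -
  assume a: "vars_in p I" "vars_in q I"
  have k: "Poly_Mapping.keys (p * q) \<subseteq> {a + b | a b. a \<in> Poly_Mapping.keys p \<and> b \<in> Poly_Mapping.keys q}"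
    by (rule keys_mult)
  show ?thesis unfolding vars_in_def
  proof
    fix m assume "m \<in> Poly_Mapping.keys (p * q)"
    then obtain u v where "m = u + v" "u \<in> Poly_Mapping.keys p" "v \<in> Poly_Mapping.keys q" using k by blast
    then show "Poly_Mapping.keys m \<subseteq> I" using a unfolding vars_in_def by (simp add: keys_add_nat)
  qed
qed

lemma vars_in_uminus: "vars_in p I \<Longrightarrow> vars_in (- p) I"
  unfolding vars_in_def by simp

lemma vars_in_single: "Poly_Mapping.keys \<mu> \<subseteq> I \<Longrightarrow> vars_in (Poly_Mapping.single \<mu> c) I"
  unfolding vars_in_def by simp

lemma vars_in_zero: "vars_in 0 I" unfolding vars_in_def by simp
lemma vars_in_one: "vars_in 1 I" unfolding vars_in_def by simp

lemma vars_in_sum: "(\<And>i. i \<in> A \<Longrightarrow> vars_in (f i) I) \<Longrightarrow> vars_in (\<Sum>i\<in>A. f i) I"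
  by (induction A rule: infinite_finite_induct) (auto intro: vars_in_add vars_in_zero)

lemma vars_in_mono: "vars_in p I \<Longrightarrow> I \<subseteq> J \<Longrightarrow> vars_in p J"
  unfolding vars_in_def by blast

definition mpoly_values :: "(nat \<Rightarrow> complex) \<Rightarrow> nat set \<Rightarrow> complex set" where
  "mpoly_values x I = {mpoly_eval p x | p. vars_in p I}"

lemma mpoly_eval_in_mpoly_values: "vars_in p I \<Longrightarrow> mpoly_eval p x \<in> mpoly_values x I"
  unfolding mpoly_values_def by blast

lemma subring_C_mpoly_values: "subring_C (mpoly_values x I)"
proof -
  have "0 \<in> mpoly_values x I" using mpoly_eval_in_mpoly_values[OF vars_in_zero[of I], of x] by simp
  moreover have "1 \<in> mpoly_values x I" using mpoly_eval_in_mpoly_values[OF vars_in_one[of I], of x] by simp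
  moreover have "a + b \<in> mpoly_values x I \<and> a * b \<in> mpoly_values x I" if ab: "a \<in> mpoly_values x I" "b \<in> mpoly_values x I" for a b
  proof -
    obtain p where p: "a = mpoly_eval p x" "vars_in p I" using ab(1) unfolding mpoly_values_def by blast
    obtain q where q: "b = mpoly_eval q x" "vars_in q I" using ab(2) unfolding mpoly_values_def by blast
    show ?thesis using mpoly_eval_in_mpoly_values[OF vars_in_add[OF p(2) q(2)], of x] mpoly_eval_in_mpoly_values[OF vars_in_mult[OF p(2) q(2)], of x]
      p(1) q(1) by (simp add: mpoly_eval_add mpoly_eval_mult)
  qed
  moreover have "- a \<in> mpoly_values x I" if a: "a \<in> mpoly_values x I" for a
  proof -
    obtain p where p: "a = mpoly_eval p x" "vars_in p I" using a unfolding mpoly_values_def by blast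
    show ?thesis using mpoly_eval_in_mpoly_values[OF vars_in_uminus[OF p(2)], of x] p(1) by (simp add: mpoly_eval_uminus)
  qed
  ultimately show ?thesis unfolding subring_C_def by blast
qed

abbreviation var_power :: "nat \<Rightarrow> nat \<Rightarrow> rat_mpoly" where
  "var_power k i \<equiv> Poly_Mapping.single (Poly_Mapping.single k i) 1"

lemma mpoly_eval_var_power[simp]: "mpoly_eval (var_power k i) x = x k ^ i"
  by (simp add: mpoly_eval_single)

lemma vars_in_var_power: "k \<in> I \<Longrightarrow> vars_in (var_power k i) I"
  by (rule vars_in_single) simp

lemma var_in_mpoly_values: "i \<in> I \<Longrightarrow> x i \<in> mpoly_values x I"
  using mpoly_eval_in_mpoly_values[OF vars_in_var_power[of i I 1], of x] by simp

lemma mpoly_values_subset_gen_field: "mpoly_values x I \<subseteq> gen_field (x ` I)"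
proof
  fix a assume "a \<in> mpoly_values x I"
  then obtain p where p: "a = mpoly_eval p x" "vars_in p I" unfolding mpoly_values_def by blast
  note F = subfield_C_gen_field[of "x ` I"]
  have "x i \<in> gen_field (x ` I)" if "i \<in> I" for i using gen_field_superset that by blast
  then show "a \<in> gen_field (x ` I)" unfolding p(1) mpoly_eval_def using p(2) unfolding vars_in_def
    by (intro subfield_C_sum[OF F] subfield_C_mult[OF F] subfield_C_of_rat[OF F] subfield_C_prod[OF F] subfield_C_power[OF F]) blast+
qed

lemma mult_single_expand:
  "(p::rat_mpoly) * Poly_Mapping.single \<nu> c = (\<Sum>\<mu>\<in>Poly_Mapping.keys p. Poly_Mapping.single (\<mu> + \<nu>) (Poly_Mapping.lookup p \<mu> * c))"
  by (subst poly_mapping_sum_single[of p]) (simp add: sum_distrib_right mult_single)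

lemma lookup_mult_single:
  "Poly_Mapping.lookup ((p::rat_mpoly) * Poly_Mapping.single \<nu> 1) l =
     (\<Sum>\<mu>\<in>Poly_Mapping.keys p. if \<mu> + \<nu> = l then Poly_Mapping.lookup p \<mu> else 0)"
  by (subst mult_single_expand) (simp add: lookup_sum lookup_single when_def)

lemma lookup_mult_single_shift:
  "Poly_Mapping.lookup ((p::rat_mpoly) * Poly_Mapping.single \<nu> 1) (\<rho> + \<nu>) = Poly_Mapping.lookup p \<rho>"
proof -
  have "Poly_Mapping.lookup (p * Poly_Mapping.single \<nu> 1) (\<rho> + \<nu>) =
     (\<Sum>\<mu>\<in>Poly_Mapping.keys p. if \<mu> = \<rho> then Poly_Mapping.lookup p \<mu> else 0)"
    unfolding lookup_mult_single by (rule sum.cong) auto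
  also have "\<dots> = Poly_Mapping.lookup p \<rho>" by (simp add: in_keys_iff)
  finally show ?thesis .
qed

lemma lookup_mult_single_none:
  "(\<forall>\<rho>. l \<noteq> \<rho> + \<nu>) \<Longrightarrow> Poly_Mapping.lookup ((p::rat_mpoly) * Poly_Mapping.single \<nu> 1) l = 0"
  unfolding lookup_mult_single by (rule sum.neutral) auto

lemma lookup_sum_var_powers:
  assumes vp: "\<forall>i<N. vars_in (p i) I" and k: "k \<notin> I" and mu: "Poly_Mapping.lookup \<mu> k = 0"
  shows "Poly_Mapping.lookup (\<Sum>i<N. p i * var_power k i) (\<mu> + Poly_Mapping.single k j)
       = (if j < N then Poly_Mapping.lookup (p j) \<mu> else 0)"
proof -
  have trm: "Poly_Mapping.lookup (p i * var_power k i) (\<mu> + Poly_Mapping.single k j)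
      = (if i = j then Poly_Mapping.lookup (p j) \<mu> else 0)" if i: "i < N" for i
  proof (cases "i = j")
    case True
    then show ?thesis by (simp add: lookup_mult_single_shift)
  next
    case False
    show ?thesis
    proof (cases "\<exists>\<rho>. \<mu> + Poly_Mapping.single k j = \<rho> + Poly_Mapping.single k i")
      case True
      then obtain \<rho> where rho: "\<mu> + Poly_Mapping.single k j = \<rho> + Poly_Mapping.single k i" by blast
      have "Poly_Mapping.lookup (p i) \<rho> = 0"
      proof (rule ccontr)
        assume "Poly_Mapping.lookup (p i) \<rho> \<noteq> 0"
        hence "\<rho> \<in> Poly_Mapping.keys (p i)" by (simp add: in_keys_iff)
        hence "Poly_Mapping.keys \<rho> \<subseteq> I" using vp i unfolding vars_in_def by blast
        hence "Poly_Mapping.lookup \<rho> k = 0" using k by (auto simp: in_keys_iff)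
        moreover have "Poly_Mapping.lookup (\<mu> + Poly_Mapping.single k j) k = Poly_Mapping.lookup (\<rho> + Poly_Mapping.single k i) k"
          using rho by simp
        ultimately have "j = i" using mu by (simp add: lookup_add)
        thus False using False by simp
      qed
      then show ?thesis using False rho lookup_mult_single_shift[of "p i" "Poly_Mapping.single k i" \<rho>] by simp
    next
      case False
      then show ?thesis using \<open>i \<noteq> j\<close> lookup_mult_single_none by auto
    qed
  qed
  have "Poly_Mapping.lookup (\<Sum>i<N. p i * var_power k i) (\<mu> + Poly_Mapping.single k j)
      = (\<Sum>i<N. Poly_Mapping.lookup (p i * var_power k i) (\<mu> + Poly_Mapping.single k j))"
    by (simp add: lookup_sum)
  also have "\<dots> = (\<Sum>i<N. if i = j then Poly_Mapping.lookup (p j) \<mu> else 0)"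
    by (rule sum.cong) (auto simp: trm)
  also have "\<dots> = (if j < N then Poly_Mapping.lookup (p j) \<mu> else 0)"
    by (simp add: sum.delta)
  finally show ?thesis .
qed

lemma sum_var_powers_eq_0:
  assumes vp: "\<forall>i<N. vars_in (p i) I" and k: "k \<notin> I" and P0: "(\<Sum>i<N. p i * var_power k i) = 0"
  shows "\<forall>i<N. p i = 0"
proof (intro allI impI)
  fix i assume i: "i < N"
  show "p i = 0"
  proof (rule poly_mapping_eqI)
    fix \<mu>
    show "Poly_Mapping.lookup (p i) \<mu> = Poly_Mapping.lookup 0 \<mu>"
    proof (cases "\<mu> \<in> Poly_Mapping.keys (p i)")
      case True
      hence "Poly_Mapping.keys \<mu> \<subseteq> I" using vp i unfolding vars_in_def by blast
      hence "Poly_Mapping.lookup \<mu> k = 0" using k by (auto simp: in_keys_iff)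
      from lookup_sum_var_powers[OF vp k this, of i] i P0 show ?thesis by simp
    next
      case False
      then show ?thesis by (simp add: in_keys_iff)
    qed
  qed
qed

lemma vars_in_sum_var_powers:
  "\<forall>i<N. vars_in (p i) I \<Longrightarrow> vars_in (\<Sum>i<N. p i * var_power k i) (insert k I)"
  by (intro vars_in_sum vars_in_mult) (auto intro: vars_in_mono vars_in_var_power)

lemma mpoly_eval_sum_var_powers:
  "mpoly_eval (\<Sum>i<N. p i * var_power k i) x = (\<Sum>i<N. mpoly_eval (p i) x * x k ^ i)"
  by (simp add: mpoly_eval_sum mpoly_eval_mult)

text \<open>The coefficient of \<open>X\<^sub>k\<^sup>i\<close> in \<open>P\<close>, as a polynomial in the remaining variables.\<close>

definition coeff_in_var :: "rat_mpoly \<Rightarrow> nat \<Rightarrow> nat \<Rightarrow> rat_mpoly" where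
  "coeff_in_var P k i = Abs_poly_mapping (\<lambda> \<mu>. if Poly_Mapping.lookup \<mu> k = 0 then Poly_Mapping.lookup P (\<mu> + Poly_Mapping.single k i) else 0)"

lemma lookup_coeff_in_var:
  "Poly_Mapping.lookup (coeff_in_var P k i) \<mu> = (if Poly_Mapping.lookup \<mu> k = 0 then Poly_Mapping.lookup P (\<mu> + Poly_Mapping.single k i) else 0)"
proof -
  let ?f = "\<lambda> \<mu>. if Poly_Mapping.lookup \<mu> k = 0 then Poly_Mapping.lookup P (\<mu> + Poly_Mapping.single k i) else 0"
  have "{\<mu>. ?f \<mu> \<noteq> 0} \<subseteq> (\<lambda> l. l - Poly_Mapping.single k i) ` Poly_Mapping.keys P"
  proof
    fix \<mu> assume "\<mu> \<in> {\<mu>. ?f \<mu> \<noteq> 0}"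
    hence "\<mu> + Poly_Mapping.single k i \<in> Poly_Mapping.keys P" by (auto simp: in_keys_iff split: if_splits)
    moreover have "\<mu> = (\<mu> + Poly_Mapping.single k i) - Poly_Mapping.single k i" by simp
    ultimately show "\<mu> \<in> (\<lambda> l. l - Poly_Mapping.single k i) ` Poly_Mapping.keys P" by blast
  qed
  hence "finite {\<mu>. ?f \<mu> \<noteq> 0}" by (rule finite_subset) simp
  thus ?thesis unfolding coeff_in_var_def by simp
qed

lemma vars_in_coeff_in_var:
  assumes "vars_in P (insert k I)" "k \<notin> I"
  shows "vars_in (coeff_in_var P k i) I"
  unfolding vars_in_def
proof
  fix \<mu> assume "\<mu> \<in> Poly_Mapping.keys (coeff_in_var P k i)"
  hence h: "Poly_Mapping.lookup \<mu> k = 0" "\<mu> + Poly_Mapping.single k i \<in> Poly_Mapping.keys P"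
    by (auto simp: in_keys_iff lookup_coeff_in_var split: if_splits)
  have "Poly_Mapping.keys \<mu> \<subseteq> insert k I"
    using h(2) assms(1) keys_add_nat[of \<mu> "Poly_Mapping.single k i"] unfolding vars_in_def by blast
  moreover have "k \<notin> Poly_Mapping.keys \<mu>" using h(1) by (simp add: in_keys_iff)
  ultimately show "Poly_Mapping.keys \<mu> \<subseteq> I" by blast
qed

lemma monomial_split_var:
  "(l::nat \<Rightarrow>\<^sub>0 nat) = (l - Poly_Mapping.single k (Poly_Mapping.lookup l k)) + Poly_Mapping.single k (Poly_Mapping.lookup l k)"
  by (rule poly_mapping_eqI) (simp add: lookup_add lookup_minus lookup_single when_def)

lemma sum_coeff_in_var:
  assumes vP: "vars_in P (insert k I)" and k: "k \<notin> I"
  obtains N where "P = (\<Sum>i<N. coeff_in_var P k i * var_power k i)"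
proof -
  define N where "N = Suc (\<Sum>l\<in>Poly_Mapping.keys P. Poly_Mapping.lookup l k)"
  have vd: "\<forall>i<N. vars_in (coeff_in_var P k i) I" using vars_in_coeff_in_var[OF vP k] by blast
  have "P = (\<Sum>i<N. coeff_in_var P k i * var_power k i)"
  proof (rule poly_mapping_eqI)
    fix l :: "nat \<Rightarrow>\<^sub>0 nat"
    define j where "j = Poly_Mapping.lookup l k"
    define \<mu> where "\<mu> = l - Poly_Mapping.single k j"
    have lam: "l = \<mu> + Poly_Mapping.single k j" unfolding \<mu>_def j_def by (rule monomial_split_var)
    have mu0: "Poly_Mapping.lookup \<mu> k = 0" unfolding \<mu>_def j_def by (simp add: lookup_minus)
    have "Poly_Mapping.lookup (\<Sum>i<N. coeff_in_var P k i * var_power k i) l = (if j < N then Poly_Mapping.lookup (coeff_in_var P k j) \<mu> else 0)"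
      unfolding lam by (rule lookup_sum_var_powers[OF vd k mu0])
    also have "\<dots> = Poly_Mapping.lookup P l"
    proof (cases "j < N")
      case True
      then show ?thesis using mu0 lam by (simp add: lookup_coeff_in_var)
    next
      case False
      have "l \<notin> Poly_Mapping.keys P"
      proof
        assume "l \<in> Poly_Mapping.keys P"
        hence "j \<le> (\<Sum>l\<in>Poly_Mapping.keys P. Poly_Mapping.lookup l k)"
          unfolding j_def by (intro member_le_sum) auto
        thus False using False unfolding N_def by simp
      qed
      then show ?thesis using False by (simp add: in_keys_iff)
    qed
    finally show "Poly_Mapping.lookup P l = Poly_Mapping.lookup (\<Sum>i<N. coeff_in_var P k i * var_power k i) l" by simp
  qed
  then show ?thesis using that by blast
qed

lemma alg_indep_Q_insert:
  assumes ind: "alg_indep_Q I x" and k: "k \<notin> I" and ncl: "x k \<notin> acl (x ` I)"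
  shows "alg_indep_Q (insert k I) x"
  unfolding alg_indep_Q_iff_vars_in
proof (intro allI impI)
  fix P assume vP: "vars_in P (insert k I)" and e: "mpoly_eval P x = 0"
  obtain N where PN: "P = (\<Sum>i<N. coeff_in_var P k i * var_power k i)" using sum_coeff_in_var[OF vP k] by blast
  have vd: "\<forall>i<N. vars_in (coeff_in_var P k i) I" using vars_in_coeff_in_var[OF vP k] by blast
  have e': "mpoly_eval (\<Sum>i<N. coeff_in_var P k i * var_power k i) x = 0" using e by (simp only: PN[symmetric])
  have sum0: "(\<Sum>i<N. mpoly_eval (coeff_in_var P k i) x * x k ^ i) = 0"
    using e' by (simp only: mpoly_eval_sum_var_powers)
  have "\<forall>i<N. mpoly_eval (coeff_in_var P k i) x = 0"
  proof (rule ccontr)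
    assume "\<not> (\<forall>i<N. mpoly_eval (coeff_in_var P k i) x = 0)"
    hence nz: "\<exists>i<N. mpoly_eval (coeff_in_var P k i) x \<noteq> 0" by blast
    have inK: "\<forall>i<N. mpoly_eval (coeff_in_var P k i) x \<in> gen_field (x ` I)"
      using vd mpoly_eval_in_mpoly_values mpoly_values_subset_gen_field by blast
    have "alg_over_sum (gen_field (x ` I)) (x k)" by (rule alg_over_sumI[OF inK nz sum0])
    hence "x k \<in> acl (x ` I)" unfolding acl_def
      using alg_over_iff_alg_over_sum[OF subfield_C_zero[OF subfield_C_gen_field]] by blast
    thus False using ncl by blast
  qed
  hence "\<forall>i<N. coeff_in_var P k i = 0" using ind vd unfolding alg_indep_Q_iff_vars_in by blast
  hence "(\<Sum>i<N. coeff_in_var P k i * var_power k i) = 0" by simp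
  with PN show "P = 0" by (rule trans)
qed

lemma alg_indep_Q_not_in_acl:
  assumes ind: "alg_indep_Q S x" and sub: "insert k I \<subseteq> S" and k: "k \<notin> I"
  shows "x k \<notin> acl (x ` I)"
proof
  assume "x k \<in> acl (x ` I)"
  then have "alg_over_sum (mpoly_values x I) (x k)"
    using acl_imp_alg_over_sum_subring[OF subring_C_mpoly_values] var_in_mpoly_values by blast
  then obtain N c where c: "\<forall>i<N. c i \<in> mpoly_values x I" "\<exists>i<N. c i \<noteq> 0" "(\<Sum>i<N. c i * x k ^ i) = 0"
    unfolding alg_over_sum_def by auto
  have "\<forall>i. \<exists>p. i < N \<longrightarrow> c i = mpoly_eval p x \<and> vars_in p I"
    using c(1) unfolding mpoly_values_def by blast
  then obtain p where p: "\<And>i. i < N \<Longrightarrow> c i = mpoly_eval (p i) x \<and> vars_in (p i) I"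
    by metis
  have vp: "\<forall>i<N. vars_in (p i) I" using p by blast
  have "mpoly_eval (\<Sum>i<N. p i * var_power k i) x = (\<Sum>i<N. c i * x k ^ i)"
    unfolding mpoly_eval_sum_var_powers using p by simp
  hence "mpoly_eval (\<Sum>i<N. p i * var_power k i) x = 0" using c(3) by simp
  moreover have "vars_in (\<Sum>i<N. p i * var_power k i) S"
    using vars_in_sum_var_powers[OF vp, of k] sub vars_in_mono by blast
  ultimately have "(\<Sum>i<N. p i * var_power k i) = 0" using ind unfolding alg_indep_Q_iff_vars_in by blast
  hence "\<forall>i<N. p i = 0" by (rule sum_var_powers_eq_0[OF vp k])
  hence "\<forall>i<N. c i = 0" using p by simp
  thus False using c(2) by blast
qed

lemma alg_indep_Q_empty: "alg_indep_Q {} x"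
  unfolding alg_indep_Q_iff_vars_in
proof (intro allI impI)
  fix P assume v: "vars_in P {}" and e: "mpoly_eval P x = 0"
  have k0: "Poly_Mapping.keys P \<subseteq> {0}" using v unfolding vars_in_def by auto
  have "mpoly_eval P x = of_rat (Poly_Mapping.lookup P 0) * monomial_eval 0 x"
    using mpoly_eval_superset[OF _ k0, of x] by simp
  hence l0: "Poly_Mapping.lookup P 0 = 0" using e by simp
  show "P = 0"
  proof (rule poly_mapping_eqI)
    fix \<mu>
    show "Poly_Mapping.lookup P \<mu> = Poly_Mapping.lookup 0 \<mu>"
      using k0 l0 by (cases "\<mu> \<in> Poly_Mapping.keys P") (auto simp: in_keys_iff)
  qed
qed

lemma alg_indep_Q_if_not_in_acl:
  assumes "finite I" and "\<forall>k\<in>I. x k \<notin> acl (x ` (I - {k}))"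
  shows "alg_indep_Q I x"
  using assms(1) subset_refl
proof (induction I rule: finite_subset_induct')
  case empty
  then show ?case by (rule alg_indep_Q_empty)
next
  case (insert k J)
  have "x k \<notin> acl (x ` J)"
    using assms(2) insert.hyps acl_mono[of "x ` J" "x ` (I - {k})"] by blast
  then show ?case using alg_indep_Q_insert insert.IH insert.hyps by blast
qed

lemma alg_indep_Q_card_le:
  assumes ind: "alg_indep_Q S x" and "finite S" "finite T" and span: "x ` S \<subseteq> acl T"
  shows "card S \<le> card T"
proof -
  define ks where "ks = sorted_list_of_set S"
  have ks: "distinct ks" "set ks = S" "length ks = card S"
    using assms(2) unfolding ks_def by auto
  have "x (ks ! j) \<notin> acl (x ` set (take j ks))" if "j < length ks" for j
  proof (rule alg_indep_Q_not_in_acl[OF ind])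
    show "insert (ks ! j) (set (take j ks)) \<subseteq> S"
      using ks(2) that set_take_subset[of j ks] by auto
    show "ks ! j \<notin> set (take j ks)"
      using ks(1) that by (auto simp: in_set_conv_nth nth_eq_iff_index_eq)
  qed
  moreover have "x (ks ! j) \<in> acl T" if "j < length ks" for j
    using span ks(2) that by auto
  ultimately have "length (map x ks) \<le> card T"
    using steinitz_exchange[OF assms(3), of "map x ks" "{}"] by (simp add: take_map)
  then show ?thesis using ks(3) by simp
qed

lemma not_in_acl_others_if_card_minimal:
  assumes "finite S" and min: "\<And>T. finite T \<Longrightarrow> y ` S \<subseteq> acl T \<Longrightarrow> card S \<le> card T"
    and "k \<in> S"
  shows "y k \<notin> acl (y ` (S - {k}))"
proof
  assume "y k \<in> acl (y ` (S - {k}))"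
  moreover have "y ` S \<subseteq> insert (y k) (y ` (S - {k}))" by blast
  ultimately have "y ` S \<subseteq> acl (y ` (S - {k}))"
    using subset_acl[of "y ` (S - {k})"] by blast
  then have "card S \<le> card (y ` (S - {k}))" by (rule min[rotated]) (use assms(1) in simp)
  also have "\<dots> \<le> card (S - {k})" using card_image_le assms(1) by blast
  also have "\<dots> < card S" using assms(1,3) by (rule card_Diff1_less)
  finally show False by simp
qed

section \<open>Schanuel's conjecture along a ladder\<close>

lemma Schanuel_card_le:
  assumes "Schanuel_conjecture" and "lin_indep_Q n z" and "finite T"
    and "\<forall>i<n. z i \<in> acl T \<and> exp (z i) \<in> acl T"
  shows "n \<le> card T"
proof -
  define w where "w i = (if i < n then z i else exp (z (i - n)))" for i
  obtain S where S: "S \<subseteq> {..<2 * n}" "card S = n" "alg_indep_Q S w"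
    using assms(1,2) unfolding Schanuel_conjecture_def w_def by blast
  have "w i \<in> acl T" if "i < 2 * n" for i
    using assms(4) that spec[OF assms(4), of "i - n"] unfolding w_def by auto
  then have "w ` S \<subseteq> acl T" using S(1) by auto
  then show ?thesis
    using alg_indep_Q_card_le[OF S(3) finite_subset[OF S(1)] assms(3)] S(2) by simp
qed

text \<open>Should both \<open>a\<^sub>k\<close> and \<open>b\<^bsup>a\<^sub>k\<^esup>\<close> be algebraic over \<open>F\<^sub>k\<^sub>-\<^sub>1\<close> (which the
  theorem excludes), it is \<open>b\<^bsup>a\<^sub>k\<^esup>\<close>.\<close>

definition ladder_choice :: "complex \<Rightarrow> (nat \<Rightarrow> complex) \<Rightarrow> nat \<Rightarrow> complex" where
  "ladder_choice L a k =
     (if \<not> alg_over (ladder_field L a (k - 1)) (a k) then a k else cpow_L L (a k))"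

lemma subfield_C_ladder_field: "subfield_C (ladder_field L a k)"
  unfolding ladder_field_def by (rule subfield_C_gen_field)

lemma ladder_generators_in_ladder_field:
  "i \<in> {1..k} \<Longrightarrow> a i \<in> ladder_field L a k \<and> cpow_L L (a i) \<in> ladder_field L a k"
  using gen_field_superset[of "a ` {1..k} \<union> (\<lambda>i. cpow_L L (a i)) ` {1..k}"]
  unfolding ladder_field_def by blast

lemma ladder_field_subset_acl:
  assumes ladder: "is_ladder L a m" and "k \<le> m"
  shows "ladder_field L a k \<subseteq> acl (ladder_choice L a ` {1..k})"
  using assms(2)
proof (induction k)
  case 0
  then show ?case using gen_field_subset_acl[of "{}"] unfolding ladder_field_def by simp
next
  case (Suc k)
  define T where "T = ladder_choice L a ` {1..Suc k}"
  have F_k: "ladder_field L a k \<subseteq> acl T"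
    using Suc acl_mono[of "ladder_choice L a ` {1..k}" T] unfolding T_def by force
  have new: "e \<in> acl T" if e: "e = a (Suc k) \<or> e = cpow_L L (a (Suc k))" for e
  proof (cases "alg_over (ladder_field L a k) e")
    case True
    then show ?thesis using alg_over_imp_in_acl[OF subfield_C_ladder_field F_k] by blast
  next
    case False
    have "alg_over (ladder_field L a k) (a (Suc k)) \<or> alg_over (ladder_field L a k) (cpow_L L (a (Suc k)))"
      using bspec[OF ladder[unfolded is_ladder_def], of "Suc k"] Suc.prems by simp
    then have "e = ladder_choice L a (Suc k)"
      using e False unfolding ladder_choice_def by auto
    then show ?thesis using subset_acl[of T] unfolding T_def by fastforce
  qed
  have old: "a i \<in> acl T \<and> cpow_L L (a i) \<in> acl T" if "i \<in> {1..k}" for i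
    using ladder_generators_in_ladder_field[OF that] F_k by blast
  have "a ` {1..Suc k} \<union> (\<lambda>i. cpow_L L (a i)) ` {1..Suc k} \<subseteq> acl T"
  proof -
    have "{1..Suc k} = insert (Suc k) {1..k}" by auto
    then show ?thesis using new old by auto
  qed
  then show ?case unfolding T_def ladder_field_def by (rule gen_field_least[OF subfield_C_acl])
qed

lemma alg_over_ladder_field_imp_acl:
  "is_ladder L a m \<Longrightarrow> k \<le> m \<Longrightarrow> alg_over (ladder_field L a k) x
    \<Longrightarrow> x \<in> acl (ladder_choice L a ` {1..k})"
  using alg_over_imp_in_acl[OF subfield_C_ladder_field ladder_field_subset_acl] by blast

lemma lin_indep_Q_ladder_multiples:
  assumes "L \<noteq> 0"
    and linind: "\<forall>q :: nat \<Rightarrow> rat. of_rat (q 0) + (\<Sum>i=1..m. of_rat (q i) * a i) = 0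
                     \<longrightarrow> (\<forall>i\<in>{0..m}. q i = 0)"
  shows "lin_indep_Q (Suc m) (\<lambda>i. if i = 0 then L else a i * L)"
  unfolding lin_indep_Q_def
proof (intro allI impI)
  fix q :: "nat \<Rightarrow> rat" and i
  assume q: "(\<Sum>i<Suc m. of_rat (q i) * (if i = 0 then L else a i * L)) = 0" and i: "i < Suc m"
  have "(\<Sum>i<Suc m. of_rat (q i) * (if i = 0 then L else a i * L))
      = of_rat (q 0) * L + (\<Sum>i<m. of_rat (q (Suc i)) * (a (Suc i) * L))"
    by (subst sum.lessThan_Suc_shift) simp
  also have "\<dots> = L * (of_rat (q 0) + (\<Sum>i=1..m. of_rat (q i) * a i))"
    by (simp add: sum.atLeast1_atMost_eq sum_distrib_left distrib_left mult_ac)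
  finally have "(\<Sum>i<Suc m. of_rat (q i) * (if i = 0 then L else a i * L))
      = L * (of_rat (q 0) + (\<Sum>i=1..m. of_rat (q i) * a i))" .
  then have "of_rat (q 0) + (\<Sum>i=1..m. of_rat (q i) * a i) = 0" using q assms(1) by simp
  then show "q i = 0" using linind i by auto
qed

definition ladder_basis :: "complex \<Rightarrow> (nat \<Rightarrow> complex) \<Rightarrow> nat \<Rightarrow> complex" where
  "ladder_basis L a k = (if k = 0 then L else ladder_choice L a k)"

lemma ladder_basis_image_pos: "0 \<notin> A \<Longrightarrow> ladder_basis L a ` A = ladder_choice L a ` A"
  unfolding ladder_basis_def by (intro image_cong) auto

lemma ladder_basis_image: "ladder_basis L a ` {0..m} = insert L (ladder_choice L a ` {1..m})"
proof -
  have "{0..m} = insert 0 {1..m}" by auto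
  then show ?thesis using ladder_basis_image_pos[of "{1..m}"] by (simp add: ladder_basis_def[of _ _ 0])
qed

locale Schanuel_ladder =
  fixes L :: complex and a :: "nat \<Rightarrow> complex" and m :: nat
  assumes Schanuel: "Schanuel_conjecture"
    and exp_L_algebraic: "algebraic (exp L)" and L_nonzero: "L \<noteq> 0"
    and ladder: "is_ladder L a m"
    and lin_indep: "\<forall>q :: nat \<Rightarrow> rat. of_rat (q 0) + (\<Sum>i=1..m. of_rat (q i) * a i) = 0
                     \<longrightarrow> (\<forall>i\<in>{0..m}. q i = 0)"
begin

lemma card_le_if_basis_in_acl:
  assumes "finite T" and span: "ladder_basis L a ` {0..m} \<subseteq> acl T"
  shows "card {0..m} \<le> card T"
proof -
  define z where "z i = (if i = 0 then L else a i * L)" for i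
  have L_T: "L \<in> acl T" and "ladder_choice L a ` {1..m} \<subseteq> acl T"
    using span unfolding ladder_basis_image by auto
  then have F_m: "ladder_field L a m \<subseteq> acl T"
    using ladder_field_subset_acl[OF ladder order.refl] acl_subset_acl[of _ T] by blast
  have "z i \<in> acl T \<and> exp (z i) \<in> acl T" if "i < Suc m" for i
  proof (cases "i = 0")
    case True
    then show ?thesis using L_T algebraic_in_acl[OF exp_L_algebraic] unfolding z_def by simp
  next
    case False
    then have "a i \<in> acl T" "cpow_L L (a i) \<in> acl T"
      using that F_m ladder_generators_in_ladder_field[of i m a L] by auto
    then show ?thesis
      using False L_T subfield_C_mult[OF subfield_C_acl] unfolding z_def cpow_L_def by auto
  qed
  then show ?thesis
    using Schanuel_card_le[OF Schanuel lin_indep_Q_ladder_multiples[OF L_nonzero lin_indep] \<open>finite T\<close>]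
    unfolding z_def by simp
qed

lemma ladder_basis_not_in_acl_others:
  "k \<le> m \<Longrightarrow> ladder_basis L a k \<notin> acl (ladder_basis L a ` ({0..m} - {k}))"
  using not_in_acl_others_if_card_minimal[of "{0..m}" "ladder_basis L a" k] card_le_if_basis_in_acl
  by auto

lemma alg_indep_ladder_basis: "alg_indep_Q {0..m} (ladder_basis L a)"
  using alg_indep_Q_if_not_in_acl ladder_basis_not_in_acl_others by simp

lemma not_alg_over_ladder_field: "\<not> alg_over (ladder_field L a m) L"
proof
  assume "alg_over (ladder_field L a m) L"
  then have "L \<in> acl (ladder_choice L a ` {1..m})"
    using alg_over_ladder_field_imp_acl[OF ladder order.refl] by blast
  moreover have "{0..m} - {0} = {1..m}" by auto
  ultimately show False
    using ladder_basis_not_in_acl_others[of 0] ladder_basis_image_pos[of "{1..m}"]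
    by (simp add: ladder_basis_def)
qed

lemma not_both_alg_over:
  assumes k: "k \<in> {1..m}"
  shows "\<not> (alg_over (ladder_field L a (k - 1)) (a k)
           \<and> alg_over (ladder_field L a (k - 1)) (cpow_L L (a k)))"
proof
  assume "alg_over (ladder_field L a (k - 1)) (a k) \<and> alg_over (ladder_field L a (k - 1)) (cpow_L L (a k))"
  then have "ladder_basis L a k \<in> acl (ladder_choice L a ` {1..k - 1})"
    using alg_over_ladder_field_imp_acl[OF ladder, of "k - 1"] k
    unfolding ladder_basis_def ladder_choice_def by auto
  moreover have "{1..k - 1} \<subseteq> {0..m} - {k}" using k by auto
  then have "ladder_choice L a ` {1..k - 1} \<subseteq> ladder_basis L a ` ({0..m} - {k})"
    using image_mono ladder_basis_image_pos[of "{1..k - 1}"] by (metis atLeastAtMost_iff not_one_le_zero)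
  ultimately show False
    using ladder_basis_not_in_acl_others[of k] k
      acl_mono[of "ladder_choice L a ` {1..k - 1}" "ladder_basis L a ` ({0..m} - {k})"]
    by auto
qed

end

theorem lemma11p4:
  fixes b L :: complex and a :: "nat \<Rightarrow> complex" and m :: nat
  assumes schanuel: "Schanuel_conjecture"
    and b_alg: "algebraic b" and b0: "b \<noteq> 0" and b1: "b \<noteq> 1"
    and logb: "exp L = b"
    and ladder: "is_ladder L a m"
    and linind: "\<forall>q :: nat \<Rightarrow> rat. of_rat (q 0) + (\<Sum>i=1..m. of_rat (q i) * a i) = 0
                     \<longrightarrow> (\<forall>i\<in>{0..m}. q i = 0)"
  shows "(\<forall>k\<in>{1..m}. \<not> alg_over (ladder_field L a (k - 1)) (a k)
                   \<longleftrightarrow> alg_over (ladder_field L a (k - 1)) (cpow_L L (a k)))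
       \<and> alg_indep_Q {0..m}
           (\<lambda>k. if k = 0 then L
                 else if \<not> alg_over (ladder_field L a (k - 1)) (a k) then a k
                 else cpow_L L (a k))
       \<and> \<not> alg_over (ladder_field L a m) L"
proof -
  interpret Schanuel_ladder L a m
    using assms by unfold_locales auto
  have "\<forall>k\<in>{1..m}. \<not> alg_over (ladder_field L a (k - 1)) (a k)
                   \<longleftrightarrow> alg_over (ladder_field L a (k - 1)) (cpow_L L (a k))"
    using not_both_alg_over ladder unfolding is_ladder_def by blast
  moreover have "ladder_basis L a = (\<lambda>k. if k = 0 then L
                 else if \<not> alg_over (ladder_field L a (k - 1)) (a k) then a k
                 else cpow_L L (a k))"
    unfolding ladder_basis_def ladder_choice_def by auto
  ultimately show ?thesis using alg_indep_ladder_basis not_alg_over_ladder_field by simp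
qed

end
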